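(* Let $X$ be a set with $|X|=n\ge2$ and let $g\in\Gamma_i(X)$ for some $i\ge1$. Then $|\Gamma(g)|=\frac{2^{2i-1}(3n-5)+4}{3}$ and $|\Gamma_{i+1}(X)|=\frac{4^{i-1}(3n-5)+2}{3}\,|\Gamma_i(X)|$.
   Context: Let $1$ be a symbol not in $X$. Elements of height $\ge 2$ are triples $g=(g^l,g^c,g^r)$; $\Gamma_0(X)=\{1\}$, $\Gamma_1(X)=X$, each $x\in X$ identified with the triple $(1,x,1)$ (so $x^l=x^r=1$); for $i\ge 2$, $\Gamma_i(X)$ is the set of triples $g\in\Gamma_{i-1}(X)\times\Gamma_{i-2}(X)\times\Gamma_{i-1}(X)$ with $g^l\neq g^r$ and $g^c\in\{(g^l)^l,(g^l)^r\}\cap\{(g^r)^l,(g^r)^r\}$; $\Gamma(X)=\bigcup_{i\ge0}\Gamma_i(X)$. For $g\in\Gamma(X)$, $\Gamma(g)=\{g_1\in\Gamma(X): g_1^l=g\text{ or }g_1^r=g\}$. *)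

theory Defs
  imports Complex_Main
begin

text \<open>Elements of Gamma(X): the symbol 1 (One), elements of X (Atom x, identified
with the triple (1,x,1)), and triples (l,c,r).\<close>
datatype 'a gam = One | Atom 'a | Tri "'a gam" "'a gam" "'a gam"

fun gl :: "'a gam \<Rightarrow> 'a gam" where
  "gl One = One"
| "gl (Atom x) = One"
| "gl (Tri l c r) = l"

fun gr :: "'a gam \<Rightarrow> 'a gam" where
  "gr One = One"
| "gr (Atom x) = One"
| "gr (Tri l c r) = r"

fun Gamma :: "'a set \<Rightarrow> nat \<Rightarrow> 'a gam set" where
  "Gamma X 0 = {One}"
| "Gamma X (Suc 0) = Atom ` X"
| "Gamma X (Suc (Suc i)) =
     {Tri l c r | l c r. l \<in> Gamma X (Suc i) \<and> c \<in> Gamma X i \<and> r \<in> Gamma X (Suc i)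
        \<and> l \<noteq> r \<and> c \<in> {gl l, gr l} \<inter> {gl r, gr r}}"

definition Gamma_all :: "'a set \<Rightarrow> 'a gam set" where
  "Gamma_all X = (\<Union>i. Gamma X i)"

definition Gamma_of :: "'a set \<Rightarrow> 'a gam \<Rightarrow> 'a gam set" where
  "Gamma_of X g = {g1 \<in> Gamma_all X. gl g1 = g \<or> gr g1 = g}"

end

theory Submission
  imports Defs
begin

text \<open>For \<open>g \<in> \<Gamma>\<^sub>k\<^sub>+\<^sub>1\<close> let \<open>\<ell>(g)\<close> be the number of elements of \<open>\<Gamma>\<^sub>k\<^sub>+\<^sub>2\<close> with left
  component \<open>g\<close>. Mirroring \<open>(l, c, r) \<mapsto> (r, c, l)\<close> matches them with those having right
  component \<open>g\<close>, so \<open>|\<Gamma>(g)| = 2\<ell>(g)\<close>. For an atom, \<open>\<ell>(x) = n - 1\<close>. For \<open>g = (a, b, d)\<close>,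
  a left extension \<open>(g, c, r)\<close> is a choice of \<open>c \<in> {a, d}\<close> and of \<open>r \<in> \<Gamma>(c) - {g}\<close>, so
  \<open>\<ell>(g) = 2\<ell>(a) + 2\<ell>(d) - 2\<close>. Hence \<open>\<ell>\<close> is constant on each level and satisfies
  \<open>\<ell>\<^sub>k\<^sub>+\<^sub>1 = 4\<ell>\<^sub>k - 2\<close>, which solves to \<open>3\<ell>\<^sub>k = 4\<^sup>k(3n - 5) + 2\<close>; and \<open>\<Gamma>\<^sub>k\<^sub>+\<^sub>2\<close> is the
  disjoint union of the left extensions of the elements of \<open>\<Gamma>\<^sub>k\<^sub>+\<^sub>1\<close>.\<close>

fun gam_height :: "'a gam \<Rightarrow> nat" where
  "gam_height One = 0"
| "gam_height (Atom x) = 1"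
| "gam_height (Tri l c r) = Suc (gam_height l)"

lemma gam_height_Gamma: "g \<in> Gamma X i \<Longrightarrow> gam_height g = i"
  by (induction X i arbitrary: g rule: Gamma.induct) auto

lemma Gamma_level_unique: "g \<in> Gamma X i \<Longrightarrow> g \<in> Gamma X j \<Longrightarrow> i = j"
  using gam_height_Gamma by metis

lemma gl_in_Gamma: "h \<in> Gamma X (Suc j) \<Longrightarrow> gl h \<in> Gamma X j"
  by (cases j) auto

lemma gr_in_Gamma: "h \<in> Gamma X (Suc j) \<Longrightarrow> gr h \<in> Gamma X j"
  by (cases j) auto

lemma finite_Gamma: "finite X \<Longrightarrow> finite (Gamma X i)"
proof (induction X i rule: Gamma.induct)
  case (3 X i)
  let ?A = "Gamma X (Suc i)" and ?B = "Gamma X i"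
  have "Gamma X (Suc (Suc i)) \<subseteq> (\<lambda>(l, c, r). Tri l c r) ` (?A \<times> ?B \<times> ?A)"
    by (auto simp: image_iff)
  moreover have "finite (?A \<times> ?B \<times> ?A)"
    using 3 by simp
  ultimately show ?case
    by (meson finite_surj)
qed auto

fun gam_mirror :: "'a gam \<Rightarrow> 'a gam" where
  "gam_mirror (Tri l c r) = Tri r c l"
| "gam_mirror g = g"

lemma gam_mirror_mirror [simp]: "gam_mirror (gam_mirror g) = g"
  by (cases g) auto

lemma inj_gam_mirror: "inj gam_mirror"
  by (metis gam_mirror_mirror injI)

lemma gl_gam_mirror [simp]: "gl (gam_mirror g) = gr g"
  by (cases g) auto

lemma gr_gam_mirror [simp]: "gr (gam_mirror g) = gl g"
  by (cases g) auto

lemma gam_mirror_Gamma: "h \<in> Gamma X i \<Longrightarrow> gam_mirror h \<in> Gamma X i"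
  by (induction X i rule: Gamma.induct) auto

lemma gl_neq_gr: "h \<in> Gamma X (Suc (Suc i)) \<Longrightarrow> gl h \<noteq> gr h"
  by auto

lemma Gamma_SucSucE:
  assumes "h \<in> Gamma X (Suc (Suc i))"
  obtains l c r where "h = Tri l c r"
  using assms by auto

lemma Tri_in_Gamma_iff:
  "Tri l c r \<in> Gamma X (Suc (Suc i)) \<longleftrightarrow> l \<in> Gamma X (Suc i) \<and> c \<in> Gamma X i
    \<and> r \<in> Gamma X (Suc i) \<and> l \<noteq> r \<and> c \<in> {gl l, gr l} \<and> c \<in> {gl r, gr r}"
  by auto

declare Gamma.simps(3) [simp del]

definition left_extensions :: "'a set \<Rightarrow> 'a gam \<Rightarrow> nat \<Rightarrow> 'a gam set" where
  "left_extensions X g i = {h \<in> Gamma X (Suc (Suc i)). gl h = g}"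

lemma finite_left_extensions: "finite X \<Longrightarrow> finite (left_extensions X g i)"
  unfolding left_extensions_def by (simp add: finite_Gamma)

lemma Gamma_of_eq_level:
  assumes "g \<in> Gamma X (Suc i)"
  shows "Gamma_of X g = {h \<in> Gamma X (Suc (Suc i)). gl h = g \<or> gr h = g}"
proof -
  have "h \<in> Gamma X (Suc (Suc i))" if "h \<in> Gamma X j" "gl h = g \<or> gr h = g" for h j
  proof (cases j)
    case 0
    then show ?thesis
      using that assms Gamma_level_unique[of g X "Suc i" 0] by auto
  next
    case (Suc j')
    then have "g \<in> Gamma X j'"
      using that gl_in_Gamma gr_in_Gamma by blast
    then show ?thesis
      using Suc that Gamma_level_unique[OF assms] by blast
  qed
  then show ?thesis
    unfolding Gamma_of_def Gamma_all_def by blast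
qed

lemma Gamma_of_eq_left_extensions:
  assumes "g \<in> Gamma X (Suc i)"
  shows "Gamma_of X g = left_extensions X g i \<union> gam_mirror ` left_extensions X g i"
proof -
  have "h \<in> gam_mirror ` left_extensions X g i"
    if "h \<in> Gamma X (Suc (Suc i))" "gr h = g" for h
  proof
    show "h = gam_mirror (gam_mirror h)"
      by simp
    show "gam_mirror h \<in> left_extensions X g i"
      using that gam_mirror_Gamma unfolding left_extensions_def by simp
  qed
  then show ?thesis
    unfolding Gamma_of_eq_level[OF assms] left_extensions_def
    by (auto intro: gam_mirror_Gamma)
qed

lemma card_Gamma_of:
  assumes "finite X" and "g \<in> Gamma X (Suc i)"
  shows "card (Gamma_of X g) = 2 * card (left_extensions X g i)"
proof -
  let ?L = "left_extensions X g i"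
  have "?L \<inter> gam_mirror ` ?L = {}"
    unfolding left_extensions_def using gl_neq_gr by fastforce
  moreover have "card (gam_mirror ` ?L) = card ?L"
    by (rule card_image[OF inj_on_subset[OF inj_gam_mirror subset_UNIV]])
  ultimately show ?thesis
    using finite_left_extensions[OF assms(1)]
    by (simp add: Gamma_of_eq_left_extensions[OF assms(2)] card_Un_disjoint)
qed

lemma card_left_extensions_Atom:
  assumes "finite X" and "x \<in> X"
  shows "card (left_extensions X (Atom x) 0) = card X - 1"
proof -
  have "left_extensions X (Atom x) 0 = (\<lambda>y. Tri (Atom x) One (Atom y)) ` (X - {x})"
    unfolding left_extensions_def using assms(2) by (auto simp: Gamma.simps elim!: Gamma_SucSucE)
  then show ?thesis
    using assms by (simp add: card_image inj_on_def)
qed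

lemma left_extensions_eq_image:
  "left_extensions X g i = (\<lambda>(c, r). Tri g c r) ` {(c, r). Tri g c r \<in> Gamma X (Suc (Suc i))}"
  unfolding left_extensions_def
proof (intro set_eqI iffI)
  fix h
  assume h: "h \<in> {h \<in> Gamma X (Suc (Suc i)). gl h = g}"
  then obtain c r where "h = Tri g c r"
    by (auto elim: Gamma_SucSucE)
  with h show "h \<in> (\<lambda>(c, r). Tri g c r) ` {(c, r). Tri g c r \<in> Gamma X (Suc (Suc i))}"
    by (auto intro: rev_image_eqI[of "(c, r)"])
qed auto

lemma left_extensions_Tri:
  assumes g: "g = Tri a b d" "g \<in> Gamma X (Suc (Suc k))"
  shows "left_extensions X g (Suc k) = (\<lambda>(c, r). Tri g c r) ` (SIGMA c:{a, d}. Gamma_of X c - {g})"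
proof -
  have a: "a \<in> Gamma X (Suc k)" and d: "d \<in> Gamma X (Suc k)"
    using g by (auto simp: Tri_in_Gamma_iff)
  have "Tri g c r \<in> Gamma X (Suc (Suc (Suc k))) \<longleftrightarrow> c \<in> {a, d} \<and> r \<in> Gamma_of X c - {g}"
    for c r
    using g a d by (auto simp: Tri_in_Gamma_iff Gamma_of_eq_level)
  then show ?thesis
    unfolding left_extensions_eq_image by auto
qed

lemma card_left_extensions_Tri:
  assumes "finite X" and g: "g = Tri a b d" "g \<in> Gamma X (Suc (Suc k))"
  shows "card (left_extensions X g (Suc k)) + 2 = card (Gamma_of X a) + card (Gamma_of X d)"
proof -
  have a: "a \<in> Gamma X (Suc k)" and d: "d \<in> Gamma X (Suc k)" and "a \<noteq> d"
    using g by (auto simp: Tri_in_Gamma_iff)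
  have fin: "finite (Gamma_of X c)" and mem: "g \<in> Gamma_of X c" if "c \<in> {a, d}" for c
    using that g a d assms(1) by (auto simp: Gamma_of_eq_level finite_Gamma)
  have "card (left_extensions X g (Suc k)) = card (SIGMA c:{a, d}. Gamma_of X c - {g})"
    unfolding left_extensions_Tri[OF g] by (rule card_image) (simp add: inj_on_def)
  also have "\<dots> = card (Gamma_of X a - {g}) + card (Gamma_of X d - {g})"
    using \<open>a \<noteq> d\<close> fin by (simp add: card_SigmaI)
  also have "\<dots> = (card (Gamma_of X a) - 1) + (card (Gamma_of X d) - 1)"
    using fin mem by (simp add: card_Diff_singleton)
  finally have "card (left_extensions X g (Suc k))
      = (card (Gamma_of X a) - 1) + (card (Gamma_of X d) - 1)" .
  moreover have "card (Gamma_of X a) > 0" "card (Gamma_of X d) > 0"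
    using fin mem by (auto simp: card_gt_0_iff)
  ultimately show ?thesis
    by linarith
qed

lemma card_left_extensions:
  assumes "finite X" and "g \<in> Gamma X (Suc k)"
  shows "3 * real (card (left_extensions X g k)) = 4 ^ k * (3 * real (card X) - 5) + 2"
  using assms(2)
proof (induction k arbitrary: g)
  case 0
  then obtain x where "x \<in> X" "g = Atom x"
    by auto
  moreover have "card X \<ge> 1"
    using assms(1) \<open>x \<in> X\<close> by (auto simp: Suc_le_eq card_gt_0_iff)
  ultimately show ?case
    using card_left_extensions_Atom[OF assms(1)] by (simp add: of_nat_diff)
next
  case (Suc k)
  obtain a b d where g: "g = Tri a b d"
    using Suc.prems by (rule Gamma_SucSucE)
  then have a: "a \<in> Gamma X (Suc k)" and d: "d \<in> Gamma X (Suc k)"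
    using Suc.prems by (simp_all add: Tri_in_Gamma_iff)
  have "card (left_extensions X g (Suc k)) + 2
      = 2 * card (left_extensions X a k) + 2 * card (left_extensions X d k)"
    using card_left_extensions_Tri[OF assms(1) g Suc.prems] card_Gamma_of[OF assms(1)] a d by simp
  then have "real (card (left_extensions X g (Suc k))) + 2
      = 2 * real (card (left_extensions X a k)) + 2 * real (card (left_extensions X d k))"
    by (metis (mono_tags) of_nat_add of_nat_mult of_nat_numeral)
  with Suc.IH[OF a] Suc.IH[OF d] show ?case
    by (simp add: field_simps)
qed

lemma Gamma_SucSuc_eq_UN_left_extensions:
  "Gamma X (Suc (Suc k)) = (\<Union>g \<in> Gamma X (Suc k). left_extensions X g k)"
  unfolding left_extensions_def using gl_in_Gamma by blast

lemma card_Gamma_SucSuc: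
  assumes "finite X"
  shows "card (Gamma X (Suc (Suc k))) = (\<Sum>g \<in> Gamma X (Suc k). card (left_extensions X g k))"
  unfolding Gamma_SucSuc_eq_UN_left_extensions
  using assms by (intro card_UN_disjoint ballI finite_Gamma finite_left_extensions)
    (auto simp: left_extensions_def)

theorem lemma6p1:
  fixes X :: "'a set" and n i :: nat and g :: "'a gam"
  assumes "finite X" and "card X = n" and "n \<ge> 2"
    and "i \<ge> 1" and "g \<in> Gamma X i"
  shows "real (card (Gamma_of X g)) = (2 ^ (2 * i - 1) * (3 * real n - 5) + 4) / 3
    \<and> real (card (Gamma X (i + 1))) =
           ((4 ^ (i - 1) * (3 * real n - 5) + 2) / 3) * real (card (Gamma X i))"
proof -
  obtain k where i: "i = Suc k"
    using assms(4) by (cases i) auto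
  have ext: "real (card (left_extensions X h k)) = (4 ^ k * (3 * real n - 5) + 2) / 3"
    if "h \<in> Gamma X i" for h
    using card_left_extensions[OF assms(1), of h k] that i assms(2) by simp
  have "(2::real) ^ (2 * i - 1) = 2 * 4 ^ k"
    by (simp add: i power_mult)
  then have "real (card (Gamma_of X g)) = (2 ^ (2 * i - 1) * (3 * real n - 5) + 4) / 3"
    using card_Gamma_of[OF assms(1)] ext[OF assms(5)] assms(5) i by (simp add: field_simps)
  moreover have "real (card (Gamma X (i + 1))) = (\<Sum>h \<in> Gamma X i. real (card (left_extensions X h k)))"
    using card_Gamma_SucSuc[OF assms(1), of k] i by simp
  then have "real (card (Gamma X (i + 1))) =
      ((4 ^ (i - 1) * (3 * real n - 5) + 2) / 3) * real (card (Gamma X i))"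
    using ext i by (simp add: mult.commute)
  ultimately show ?thesis ..
qed

end
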